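(* Let $\mathcal{A}$ be a central and essential arrangement in $\mathbb{Q}^l$ as in the context, $\sigma$ a term ordering and $p$ a prime. If $p$ is $(\sigma,2)$-lucky for $\mathcal{A}$, then $p$ is good for $\mathcal{A}$.
   Context: $\mathcal{A}=\{H_1,\dots,H_n\}$: $n$ distinct linear hyperplanes in $\mathbb{Q}^l$ with $\bigcap H_i=\{0\}$, $H_i=\{\alpha_i=0\}$, $\alpha_i\in\mathbb{Z}[x_1,\dots,x_l]$ a nonzero linear form whose coefficients are not all divisible by any prime, $Q(\mathcal{A})=\prod\alpha_i$. $p$ is good for $\mathcal{A}$ if the reduction of $Q(\mathcal{A})$ mod $p$ is reduced, equivalently the reductions $(\alpha_i)_p,(\alpha_j)_p$ are not scalar multiples of one another for all $i<j$. For a term ordering $\sigma$ and nonzero $f\in\mathbb{Z}[x_1,\dots,x_l]$, $\mathrm{LM}_\sigma(f)$ is the $\sigma$-leading term times its coefficient $\mathrm{LC}_\sigma(f)$. A minimal strong $\sigma$-Gröbner basis of an ideal $I\subseteq\mathbb{Z}[x_1,\dots,x_l]$ is a finite generating set $G$ of nonzero elements of $I$ such that every nonzero $f\in I$ has $\mathrm{LM}_\sigma(f)$ divisible by some $\mathrm{LM}_\sigma(g)$, $g\in G$, and no $\mathrm{LM}_\sigma(g)$ divides $\mathrm{LM}_\sigma(g')$ for distinct $g,g'$; its set of leading coefficients is independent of the choice. $p$ is $\sigma$-lucky for $I$ if it divides none of them. For $1\le k\le n$, $p$ is $(\sigma,k)$-lucky for $\mathcal{A}$ if it is $\sigma$-lucky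 for every ideal $\langle\alpha_{i_1},\dots,\alpha_{i_k}\rangle\subseteq\mathbb{Z}[x_1,\dots,x_l]$ with $i_1<\dots<i_k$ and $\operatorname{codim}(H_{i_1}\cap\dots\cap H_{i_k})=k$. *)

theory Defs
  imports Complex_Main "HOL-Library.Poly_Mapping" "HOL-Number_Theory.Cong"
begin

text \<open>Multivariate integer polynomials: a monomial x^e is a finitely supported
 exponent vector e :: nat =>0 nat (variable x_(k+1) has index k), a polynomial
 is a finitely supported map from monomials to integer coefficients.\<close>

type_synonym monom = "nat \<Rightarrow>\<^sub>0 nat"
type_synonym mpoly = "monom \<Rightarrow>\<^sub>0 int"

definition monoms :: "nat \<Rightarrow> monom set" where
  "monoms l = {m. Poly_Mapping.keys m \<subseteq> {..<l}}"

definition polys :: "nat \<Rightarrow> mpoly set" where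
  "polys l = {f. Poly_Mapping.keys f \<subseteq> monoms l}"

definition linform :: "nat \<Rightarrow> (nat \<Rightarrow> int) \<Rightarrow> mpoly" where
  "linform l a = (\<Sum>k<l. Poly_Mapping.single (Poly_Mapping.single k 1) (a k))"

definition ideal_gen :: "nat \<Rightarrow> mpoly set \<Rightarrow> mpoly set" where
  "ideal_gen l G = {f. \<exists>c. (\<forall>g\<in>G. c g \<in> polys l) \<and> f = (\<Sum>g\<in>G. c g * g)}"

definition term_order :: "nat \<Rightarrow> (monom \<Rightarrow> monom \<Rightarrow> bool) \<Rightarrow> bool" where
  "term_order l le \<longleftrightarrow>
     (\<forall>m\<in>monoms l. le m m) \<and>
     (\<forall>m1\<in>monoms l. \<forall>m2\<in>monoms l. le m1 m2 \<and> le m2 m1 \<longrightarrow> m1 = m2) \<and>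
     (\<forall>m1\<in>monoms l. \<forall>m2\<in>monoms l. \<forall>m3\<in>monoms l. le m1 m2 \<and> le m2 m3 \<longrightarrow> le m1 m3) \<and>
     (\<forall>m1\<in>monoms l. \<forall>m2\<in>monoms l. le m1 m2 \<or> le m2 m1) \<and>
     (\<forall>m\<in>monoms l. le 0 m) \<and>
     (\<forall>m1\<in>monoms l. \<forall>m2\<in>monoms l. \<forall>m\<in>monoms l. le m1 m2 \<longrightarrow> le (m1 + m) (m2 + m))"

definition lterm :: "(monom \<Rightarrow> monom \<Rightarrow> bool) \<Rightarrow> mpoly \<Rightarrow> monom" where
  "lterm le f = (THE m. m \<in> Poly_Mapping.keys f \<and> (\<forall>m'\<in>Poly_Mapping.keys f. le m' m))"

definition lcoeff :: "(monom \<Rightarrow> monom \<Rightarrow> bool) \<Rightarrow> mpoly \<Rightarrow> int" where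
  "lcoeff le f = Poly_Mapping.lookup f (lterm le f)"

definition LM :: "(monom \<Rightarrow> monom \<Rightarrow> bool) \<Rightarrow> mpoly \<Rightarrow> mpoly" where
  "LM le f = Poly_Mapping.single (lterm le f) (lcoeff le f)"

definition pdvd :: "nat \<Rightarrow> mpoly \<Rightarrow> mpoly \<Rightarrow> bool" where
  "pdvd l g f \<longleftrightarrow> (\<exists>h\<in>polys l. f = h * g)"

definition min_strong_GB :: "nat \<Rightarrow> (monom \<Rightarrow> monom \<Rightarrow> bool) \<Rightarrow> mpoly set \<Rightarrow> mpoly set \<Rightarrow> bool" where
  "min_strong_GB l le I G \<longleftrightarrow>
     finite G \<and> G \<subseteq> I - {0} \<and> ideal_gen l G = I \<and>
     (\<forall>f\<in>I - {0}. \<exists>g\<in>G. pdvd l (LM le g) (LM le f)) \<and>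
     (\<forall>g\<in>G. \<forall>g'\<in>G. g \<noteq> g' \<longrightarrow> \<not> pdvd l (LM le g) (LM le g'))"

definition lucky :: "nat \<Rightarrow> (monom \<Rightarrow> monom \<Rightarrow> bool) \<Rightarrow> int \<Rightarrow> mpoly set \<Rightarrow> bool" where
  "lucky l le p I \<longleftrightarrow> (\<forall>G. min_strong_GB l le I G \<longrightarrow> (\<forall>g\<in>G. \<not> p dvd lcoeff le g))"

text \<open>Arrangements: alpha i = coefficient vector of the i-th form (i < n), entries k < l.
 Vectors of Q^l are functions nat \<Rightarrow> rat vanishing outside {..<l}.\<close>
definition qvecs :: "nat \<Rightarrow> (nat \<Rightarrow> rat) set" where
  "qvecs l = {x. \<forall>k\<ge>l. x k = 0}"

definition hyperplane :: "nat \<Rightarrow> (nat \<Rightarrow> int) \<Rightarrow> (nat \<Rightarrow> rat) set" where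
  "hyperplane l a = {x\<in>qvecs l. (\<Sum>k<l. of_int (a k) * x k) = 0}"

definition lin_indep_list :: "(nat \<Rightarrow> rat) list \<Rightarrow> bool" where
  "lin_indep_list vs \<longleftrightarrow>
     (\<forall>c::nat \<Rightarrow> rat. (\<lambda>k. \<Sum>i<length vs. c i * (vs ! i) k) = (\<lambda>k. 0) \<longrightarrow> (\<forall>i<length vs. c i = 0))"

definition qdim :: "(nat \<Rightarrow> rat) set \<Rightarrow> nat" where
  "qdim W = (GREATEST d. \<exists>vs. length vs = d \<and> set vs \<subseteq> W \<and> lin_indep_list vs)"

definition codim :: "nat \<Rightarrow> (nat \<Rightarrow> rat) set \<Rightarrow> nat" where
  "codim l W = l - qdim W"

definition arrangement :: "nat \<Rightarrow> nat \<Rightarrow> (nat \<Rightarrow> nat \<Rightarrow> int) \<Rightarrow> bool" where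
  "arrangement l n alpha \<longleftrightarrow>
     (\<forall>i<n. \<exists>k<l. alpha i k \<noteq> 0) \<and>
     (\<forall>i<n. \<forall>q::int. prime q \<longrightarrow> \<not> (\<forall>k<l. q dvd alpha i k)) \<and>
     (\<forall>i<n. \<forall>j<n. i \<noteq> j \<longrightarrow> hyperplane l (alpha i) \<noteq> hyperplane l (alpha j)) \<and>
     (\<Inter>i<n. hyperplane l (alpha i)) = {\<lambda>k. 0}"

definition good_prime :: "nat \<Rightarrow> nat \<Rightarrow> (nat \<Rightarrow> nat \<Rightarrow> int) \<Rightarrow> int \<Rightarrow> bool" where
  "good_prime l n alpha p \<longleftrightarrow>
     (\<forall>i j. i < j \<and> j < n \<longrightarrow>
        \<not> (\<exists>c. \<forall>k<l. [alpha i k = c * alpha j k] (mod p)) \<and>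
        \<not> (\<exists>c. \<forall>k<l. [alpha j k = c * alpha i k] (mod p)))"

definition lucky_k :: "nat \<Rightarrow> nat \<Rightarrow> (nat \<Rightarrow> nat \<Rightarrow> int) \<Rightarrow> (monom \<Rightarrow> monom \<Rightarrow> bool) \<Rightarrow> nat \<Rightarrow> int \<Rightarrow> bool" where
  "lucky_k l n alpha le k p \<longleftrightarrow>
     (\<forall>S. S \<subseteq> {..<n} \<and> card S = k \<and> codim l (\<Inter>i\<in>S. hyperplane l (alpha i)) = k \<longrightarrow>
        lucky l le p (ideal_gen l ((\<lambda>i. linform l (alpha i)) ` S)))"

end

(*
  If p were not good, two of the forms, with coefficients a_k and b_k, would be proportional
  modulo p: a_k = c * b_k (mod p). Their hyperplanes are distinct, so their intersection has
  codimension 2 and p is lucky for the ideal I they generate. Minimal strong Groebner bases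
  exist (Dickson's lemma), so whenever a variable x_w is the leading term of an element of I,
  some element of I with leading term x_w has leading coefficient prime to p. Modulo p the
  linear part of every element of I is a multiple of the second form; hence p does not divide
  b_w, but p divides b_k for every variable x_k above x_w. Applying this both to the leading
  variable x_u of the first form and to the leading variable x_v of the elimination
  a_u * (second form) - b_u * (first form), which has no x_u term, gives a contradiction
  whichever of x_u, x_v is larger.
*)
theory Submission
  imports Defs "HOL-Library.Function_Algebras"
begin

abbreviation lookup where "lookup \<equiv> Poly_Mapping.lookup"
abbreviation keys where "keys \<equiv> Poly_Mapping.keys"
abbreviation single where "single \<equiv> Poly_Mapping.single"

lemma lookup_mult_single_add:
  fixes p :: "('a::cancel_comm_monoid_add, 'b::semiring_0) poly_mapping"
  shows "lookup (p * single t x) (s + t) = lookup p s * x"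
proof -
  have inner: "(\<Sum>q. lookup (single t x) q when s + t = m + q) = (x when s = m)" for m
  proof -
    have "(\<Sum>q. lookup (single t x) q when s + t = m + q) = (\<Sum>q. (x when s + t = m + t) when t = q)"
      by (rule Sum_any.cong) (auto simp: when_def lookup_single)
    then show ?thesis by simp
  qed
  have "lookup (p * single t x) (s + t) = (\<Sum>m. lookup p m * (x when s = m))"
    by (simp add: lookup_mult inner)
  also have "\<dots> = lookup p s * x"
    by (simp add: mult_when)
  finally show ?thesis .
qed

lemma lookup_mult_single_not_add:
  fixes p :: "('a::monoid_add, 'b::semiring_0) poly_mapping"
  assumes "\<nexists>u. s = u + t"
  shows "lookup (p * single t x) s = 0"
proof -
  have "s \<notin> keys (p * single t x)"
    using keys_mult[of p "single t x"] assms by (auto split: if_splits)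
  then show ?thesis by (simp add: in_keys_iff)
qed

lemma monoms_add: "a \<in> monoms l \<Longrightarrow> b \<in> monoms l \<Longrightarrow> a + b \<in> monoms l"
  unfolding monoms_def using keys_add[of a b] by auto

lemma monoms_zero [simp]: "0 \<in> monoms l"
  unfolding monoms_def by simp

lemma monoms_add_right: "a + b \<in> monoms l \<Longrightarrow> b \<in> monoms l"
proof -
  have "keys b \<subseteq> keys (a + b)" by (auto simp: in_keys_iff lookup_add)
  then show "a + b \<in> monoms l \<Longrightarrow> b \<in> monoms l" unfolding monoms_def by auto
qed

lemma monoms_add_left: "a + b \<in> monoms l \<Longrightarrow> a \<in> monoms l"
  using monoms_add_right[of b a l] by (simp add: add.commute)

lemma monoms_lookup_eq_0: "m \<in> monoms l \<Longrightarrow> l \<le> k \<Longrightarrow> lookup m k = 0"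
  unfolding monoms_def by (auto simp: in_keys_iff)

lemma single_var_in_monoms: "k < l \<Longrightarrow> single k 1 \<in> monoms l"
  unfolding monoms_def by simp

lemma monom_add_antisym:
  assumes "(m'::monom) = e + m" "m = e' + m'"
  shows "m = m'"
proof -
  have "(e' + e) + m = 0 + m" using assms by (simp add: add.assoc)
  then have "e' + e = 0" by (rule add_right_imp_eq)
  then have "e = 0" by (intro poly_mapping_eqI) (metis lookup_add lookup_zero add_is_0)
  then show ?thesis using assms by simp
qed

lemma monom_dvd_single_var:
  assumes "(single u 1 :: monom) = e + t"
  shows "t = 0 \<or> t = single u 1"
proof -
  have outside: "lookup t k = 0" if "k \<noteq> u" for k
    using arg_cong[OF assms, of "\<lambda>m. lookup m k"] that by (simp add: lookup_add lookup_single)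
  have "lookup e u + lookup t u = 1"
    using arg_cong[OF assms, of "\<lambda>m. lookup m u"] by (simp add: lookup_add)
  then have "lookup t u = 0 \<or> lookup t u = 1" by arith
  then show ?thesis
  proof
    assume "lookup t u = 0"
    then have "t = 0" by (intro poly_mapping_eqI) (metis outside lookup_zero)
    then show ?thesis ..
  next
    assume "lookup t u = 1"
    then have "t = single u 1"
      by (intro poly_mapping_eqI) (metis outside lookup_single_eq lookup_single_not_eq)
    then show ?thesis ..
  qed
qed

lemma polys_zero [simp]: "0 \<in> polys l"
  unfolding polys_def by simp

lemma polys_one [simp]: "1 \<in> polys l"
  unfolding polys_def by simp

lemma polys_add: "f \<in> polys l \<Longrightarrow> g \<in> polys l \<Longrightarrow> f + g \<in> polys l"
  unfolding polys_def using keys_add[of f g] by auto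

lemma polys_mult: "f \<in> polys l \<Longrightarrow> g \<in> polys l \<Longrightarrow> f * g \<in> polys l"
  unfolding polys_def using keys_mult[of f g] monoms_add by blast

lemma polys_single: "m \<in> monoms l \<Longrightarrow> single m c \<in> polys l"
  unfolding polys_def by auto

lemma polys_sum: "(\<And>x. x \<in> A \<Longrightarrow> F x \<in> polys l) \<Longrightarrow> sum F A \<in> polys l"
  by (induction A rule: infinite_finite_induct) (auto intro: polys_add)

lemma keys_polys: "f \<in> polys l \<Longrightarrow> m \<in> keys f \<Longrightarrow> m \<in> monoms l"
  unfolding polys_def by auto

definition is_ideal :: "nat \<Rightarrow> mpoly set \<Rightarrow> bool" where
  "is_ideal l I \<longleftrightarrow> I \<subseteq> polys l \<and> 0 \<in> I \<and> (\<forall>f\<in>I. \<forall>g\<in>I. f + g \<in> I) \<and>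
     (\<forall>h\<in>polys l. \<forall>f\<in>I. h * f \<in> I)"

lemma is_idealD:
  assumes "is_ideal l I"
  shows "I \<subseteq> polys l" "0 \<in> I" "\<And>f g. f \<in> I \<Longrightarrow> g \<in> I \<Longrightarrow> f + g \<in> I"
    "\<And>h f. h \<in> polys l \<Longrightarrow> f \<in> I \<Longrightarrow> h * f \<in> I"
  using assms unfolding is_ideal_def by auto

lemma is_ideal_mult_single:
  "is_ideal l I \<Longrightarrow> f \<in> I \<Longrightarrow> m \<in> monoms l \<Longrightarrow> f * single m c \<in> I"
  using is_idealD(4)[of l I "single m c" f] polys_single by (simp add: mult.commute)

lemma is_ideal_diff:
  assumes "is_ideal l I" "f \<in> I" "g \<in> I"
  shows "f - g \<in> I"
proof -
  have "g * single 0 (-1) \<in> I" using assms by (simp add: is_ideal_mult_single)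
  then have "f + g * single 0 (-1) \<in> I" using is_idealD(3)[OF assms(1,2)] by blast
  then show ?thesis by (simp add: single_uminus)
qed

lemma is_ideal_ideal_gen:
  assumes "G \<subseteq> polys l"
  shows "is_ideal l (ideal_gen l G)"
  unfolding is_ideal_def
proof (intro conjI ballI)
  show "ideal_gen l G \<subseteq> polys l"
    unfolding ideal_gen_def using assms by (auto intro!: polys_sum polys_mult)
  show "0 \<in> ideal_gen l G"
    unfolding ideal_gen_def by (auto intro: exI[of _ "\<lambda>_. 0"])
next
  fix f g assume "f \<in> ideal_gen l G" "g \<in> ideal_gen l G"
  then obtain c d where "\<forall>g\<in>G. c g \<in> polys l" "f = (\<Sum>g\<in>G. c g * g)"
    and "\<forall>g\<in>G. d g \<in> polys l" "g = (\<Sum>g\<in>G. d g * g)"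
    unfolding ideal_gen_def by blast
  then show "f + g \<in> ideal_gen l G"
    unfolding ideal_gen_def
    by (auto intro!: exI[of _ "\<lambda>x. c x + d x"] simp: polys_add sum.distrib distrib_right)
next
  fix h f assume "h \<in> polys l" "f \<in> ideal_gen l G"
  then obtain c where "\<forall>g\<in>G. c g \<in> polys l" "f = (\<Sum>g\<in>G. c g * g)"
    unfolding ideal_gen_def by blast
  with \<open>h \<in> polys l\<close> show "h * f \<in> ideal_gen l G"
    unfolding ideal_gen_def
    by (auto intro!: exI[of _ "\<lambda>x. h * c x"] simp: polys_mult sum_distrib_left mult.assoc)
qed

lemma ideal_gen_base:
  assumes "finite G" "g \<in> G"
  shows "g \<in> ideal_gen l G"
proof -
  have "g = (\<Sum>x\<in>G. (if x = g then 1 else 0) * x)"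
    using assms by (simp add: if_distrib[of "\<lambda>c. c * _"] sum.delta' cong: if_cong)
  then show ?thesis
    unfolding ideal_gen_def by (auto intro!: exI[of _ "\<lambda>x. if x = g then 1 else 0"])
qed

lemma ideal_gen_subset:
  assumes "is_ideal l I" "G \<subseteq> I"
  shows "ideal_gen l G \<subseteq> I"
proof
  fix f assume "f \<in> ideal_gen l G"
  then obtain c where c: "\<forall>g\<in>G. c g \<in> polys l" and f: "f = (\<Sum>g\<in>G. c g * g)"
    unfolding ideal_gen_def by blast
  have "c g * g \<in> I" if "g \<in> G" for g
    using is_idealD(4)[OF assms(1)] c assms(2) that by blast
  then show "f \<in> I" unfolding f
    by (induction G rule: infinite_finite_induct) (auto intro: is_idealD[OF assms(1)])
qed

lemma ideal_gen_pair_elem: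
  assumes "f \<in> ideal_gen l {A, B}"
  obtains c d where "f = c * A + d * B"
proof -
  obtain e where e: "f = (\<Sum>g\<in>{A, B}. e g * g)"
    using assms unfolding ideal_gen_def by blast
  show ?thesis
  proof (cases "A = B")
    case True
    then show ?thesis using e that[of "e A" 0] by simp
  next
    case False
    then show ?thesis using e that[of "e A" "e B"] by simp
  qed
qed

lemma term_orderD:
  assumes "term_order l le"
  shows "\<And>m. m \<in> monoms l \<Longrightarrow> le m m"
    "\<And>m1 m2. m1 \<in> monoms l \<Longrightarrow> m2 \<in> monoms l \<Longrightarrow> le m1 m2 \<Longrightarrow> le m2 m1 \<Longrightarrow> m1 = m2"
    "\<And>m1 m2 m3. m1 \<in> monoms l \<Longrightarrow> m2 \<in> monoms l \<Longrightarrow> m3 \<in> monoms l \<Longrightarrow>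
      le m1 m2 \<Longrightarrow> le m2 m3 \<Longrightarrow> le m1 m3"
    "\<And>m1 m2. m1 \<in> monoms l \<Longrightarrow> m2 \<in> monoms l \<Longrightarrow> le m1 m2 \<or> le m2 m1"
    "\<And>m. m \<in> monoms l \<Longrightarrow> le 0 m"
    "\<And>m1 m2 m. m1 \<in> monoms l \<Longrightarrow> m2 \<in> monoms l \<Longrightarrow> m \<in> monoms l \<Longrightarrow>
      le m1 m2 \<Longrightarrow> le (m1 + m) (m2 + m)"
  using assms unfolding term_order_def by blast+

lemma term_order_le_add:
  assumes "term_order l le" "m \<in> monoms l" "e \<in> monoms l"
  shows "le m (e + m)"
  using term_orderD(6)[OF assms(1) monoms_zero assms(3,2) term_orderD(5)[OF assms(1,3)]]
  by (simp add: add.commute)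

definition term_less :: "nat \<Rightarrow> (monom \<Rightarrow> monom \<Rightarrow> bool) \<Rightarrow> (monom \<times> monom) set" where
  "term_less l le = {(m', m). m' \<in> monoms l \<and> m \<in> monoms l \<and> le m' m \<and> m' \<noteq> m}"

lemma trans_term_less:
  assumes "term_order l le"
  shows "trans (term_less l le)"
proof (rule transI)
  fix x y z assume "(x, y) \<in> term_less l le" "(y, z) \<in> term_less l le"
  then have "x \<in> monoms l" "y \<in> monoms l" "z \<in> monoms l" "le x y" "le y z" "y \<noteq> z"
    unfolding term_less_def by auto
  then show "(x, z) \<in> term_less l le"
    unfolding term_less_def using term_orderD(2,3)[OF assms] by blast
qed

lemma term_order_has_max:
  assumes "term_order l le" "finite A" "A \<noteq> {}" "A \<subseteq> monoms l"
  shows "\<exists>m\<in>A. \<forall>m'\<in>A. le m' m"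
  using assms(2-4)
proof (induction A rule: finite_ne_induct)
  case (singleton x)
  then show ?case using term_orderD(1)[OF assms(1)] by auto
next
  case (insert x F)
  then obtain m where m: "m \<in> F" "\<forall>m'\<in>F. le m' m" by auto
  have mx: "m \<in> monoms l" "x \<in> monoms l" using insert m by auto
  show ?case
  proof (cases "le x m")
    case True
    then show ?thesis using m by auto
  next
    case False
    then have "le m x" using term_orderD(4)[OF assms(1) mx] by auto
    then show ?thesis using m insert.prems term_orderD(1,3)[OF assms(1)] mx
      by (metis insert_iff subset_iff)
  qed
qed

context
  fixes l le
  assumes TO: "term_order l le"
begin

lemma lterm_eqI:
  assumes "f \<in> polys l" "t \<in> keys f" "\<And>m. m \<in> keys f \<Longrightarrow> le m t"
  shows "lterm le f = t"
  unfolding lterm_def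
proof (rule the_equality)
  fix m assume m: "m \<in> keys f \<and> (\<forall>m'\<in>keys f. le m' m)"
  then have "le m t" "le t m" using assms(2,3) by auto
  then show "m = t" using term_orderD(2)[OF TO] keys_polys[OF assms(1)] m assms(2) by blast
qed (use assms in blast)

lemma lterm_in_keys: "f \<in> polys l \<Longrightarrow> f \<noteq> 0 \<Longrightarrow> lterm le f \<in> keys f"
  and keys_le_lterm: "f \<in> polys l \<Longrightarrow> m \<in> keys f \<Longrightarrow> le m (lterm le f)"
proof -
  have *: "lterm le f \<in> keys f \<and> (\<forall>m\<in>keys f. le m (lterm le f))"
    if "f \<in> polys l" "f \<noteq> 0" for f
  proof -
    have "keys f \<noteq> {}" "keys f \<subseteq> monoms l" using that keys_polys by auto
    then obtain t where "t \<in> keys f" "\<forall>m\<in>keys f. le m t"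
      using term_order_has_max[OF TO finite_keys] by blast
    then show ?thesis using lterm_eqI[OF that(1)] by simp
  qed
  show "f \<in> polys l \<Longrightarrow> f \<noteq> 0 \<Longrightarrow> lterm le f \<in> keys f" using * by blast
  show "f \<in> polys l \<Longrightarrow> m \<in> keys f \<Longrightarrow> le m (lterm le f)" using * by fastforce
qed

lemma lterm_in_monoms: "f \<in> polys l \<Longrightarrow> f \<noteq> 0 \<Longrightarrow> lterm le f \<in> monoms l"
  using lterm_in_keys keys_polys by blast

lemma lcoeff_nonzero: "f \<in> polys l \<Longrightarrow> f \<noteq> 0 \<Longrightarrow> lcoeff le f \<noteq> 0"
  using lterm_in_keys unfolding lcoeff_def by (simp add: in_keys_iff)

lemma lookup_above_lterm:
  assumes "f \<in> polys l" "m \<in> monoms l" "le (lterm le f) m" "m \<noteq> lterm le f"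
  shows "lookup f m = 0"
proof (rule ccontr)
  assume "lookup f m \<noteq> 0"
  then have "m \<in> keys f" "f \<noteq> 0" by (auto simp: in_keys_iff)
  then have "le m (lterm le f)" "lterm le f \<in> monoms l"
    using assms(1) keys_le_lterm lterm_in_monoms by blast+
  then show False using assms(2-4) term_orderD(2)[OF TO] by blast
qed

lemma lterm_mult_single:
  assumes "g \<in> polys l" "g \<noteq> 0" "e \<in> monoms l" "d \<noteq> 0"
  shows "g * single e d \<noteq> 0" "lterm le (g * single e d) = lterm le g + e"
    "lcoeff le (g * single e d) = lcoeff le g * d"
proof -
  have gd: "g * single e d \<in> polys l" using assms by (intro polys_mult polys_single)
  have lookup_lterm: "lookup (g * single e d) (lterm le g + e) = lcoeff le g * d"
    unfolding lcoeff_def by (rule lookup_mult_single_add)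
  then have key: "lterm le g + e \<in> keys (g * single e d)"
    using lcoeff_nonzero[OF assms(1,2)] assms(4) by (simp add: in_keys_iff)
  then show "g * single e d \<noteq> 0" by auto
  show lt: "lterm le (g * single e d) = lterm le g + e"
  proof (rule lterm_eqI[OF gd key])
    fix m assume "m \<in> keys (g * single e d)"
    then obtain m' where m': "m = m' + e" "m' \<in> keys g"
      using keys_mult[of g "single e d"] by (auto split: if_splits)
    then show "le m (lterm le g + e)"
      using term_orderD(6)[OF TO _ lterm_in_monoms[OF assms(1,2)] assms(3)]
        keys_le_lterm[OF assms(1)] keys_polys[OF assms(1)] by blast
  qed
  show "lcoeff le (g * single e d) = lcoeff le g * d"
    using lookup_lterm unfolding lcoeff_def lt .
qed

lemma lterm_lincomb:
  assumes "f \<in> polys l" "f' \<in> polys l" "f \<noteq> 0" "f' \<noteq> 0" "lterm le f' = lterm le f"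
    and "lcoeff le f * u + lcoeff le f' * v \<noteq> 0"
  defines "h \<equiv> f * single 0 u + f' * single 0 v"
  shows "lterm le h = lterm le f" "lcoeff le h = lcoeff le f * u + lcoeff le f' * v"
proof -
  have lookup_h: "lookup h m = lookup f m * u + lookup f' m * v" for m
    using lookup_mult_single_add[of f 0 u m] lookup_mult_single_add[of f' 0 v m]
    unfolding h_def by (simp add: lookup_add)
  have "h \<in> polys l" unfolding h_def using assms(1,2) by (intro polys_add polys_mult polys_single) auto
  moreover have "lterm le f \<in> keys h"
    using assms(5,6) lookup_h unfolding lcoeff_def by (simp add: in_keys_iff)
  moreover have "le m (lterm le f)" if "m \<in> keys h" for m
  proof -
    have "m \<in> keys f \<or> m \<in> keys f'" using that lookup_h by (auto simp: in_keys_iff)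
    then show ?thesis using keys_le_lterm[OF assms(1)] keys_le_lterm[OF assms(2)] assms(5) by auto
  qed
  ultimately show lt: "lterm le h = lterm le f" by (rule lterm_eqI)
  show "lcoeff le h = lcoeff le f * u + lcoeff le f' * v"
    unfolding lcoeff_def lt lookup_h assms(5) ..
qed

lemma lterm_diff_less:
  assumes "f \<in> polys l" "h \<in> polys l" "f \<noteq> 0" "h \<noteq> 0" "f \<noteq> h"
    and "lterm le h = lterm le f" "lcoeff le h = lcoeff le f"
  shows "(lterm le (f - h), lterm le f) \<in> term_less l le"
proof -
  have fh: "f - h \<in> polys l" "f - h \<noteq> 0" using assms(1,2,5) polys_add[of f l "- h"]
    by (auto simp: polys_def)
  have "lterm le (f - h) \<in> keys f \<or> lterm le (f - h) \<in> keys h"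
    using lterm_in_keys[OF fh] keys_diff[of f h] by blast
  then have "le (lterm le (f - h)) (lterm le f)"
    using keys_le_lterm[OF assms(1)] keys_le_lterm[OF assms(2)] assms(6) by auto
  moreover have "lookup (f - h) (lterm le f) = 0"
    using assms(6,7) unfolding lcoeff_def by (simp add: lookup_minus)
  then have "lterm le (f - h) \<noteq> lterm le f"
    using lterm_in_keys[OF fh] by (auto simp: in_keys_iff)
  ultimately show ?thesis
    unfolding term_less_def using lterm_in_monoms fh assms(1,3) by auto
qed

end

section \<open>Dickson's lemma\<close>

lemma nat_seq_mono_subseq:
  fixes s :: "nat \<Rightarrow> nat"
  shows "\<exists>r. strict_mono r \<and> (\<forall>n. s (r n) \<le> s (r (Suc n)))"
proof -
  obtain f where f: "strict_mono f" "monoseq (\<lambda>n. s (f n))" using seq_monosub by blast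
  show ?thesis
  proof (cases "\<forall>m n. m \<le> n \<longrightarrow> s (f m) \<le> s (f n)")
    case True
    then show ?thesis using f(1) by (intro exI[of _ f]) auto
  next
    case False
    then have dec: "\<forall>m n. m \<le> n \<longrightarrow> s (f n) \<le> s (f m)"
      using f(2) unfolding monoseq_def by blast
    \<comment> \<open>a non-increasing sequence of naturals is eventually constant\<close>
    define v where "v = (LEAST v. \<exists>n. s (f n) = v)"
    have "\<exists>n. s (f n) = v" unfolding v_def by (rule LeastI_ex) blast
    then obtain N where N: "s (f N) = v" by blast
    have const: "s (f n) = v" if "N \<le> n" for n
    proof (rule antisym)
      show "s (f n) \<le> v" using dec that N by auto
      show "v \<le> s (f n)" unfolding v_def by (rule Least_le) blast
    qed
    show ?thesis
      by (rule exI[of _ "\<lambda>n. f (n + N)"]) (use f(1) const in \<open>auto simp: strict_mono_def\<close>)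
  qed
qed

lemma dickson_prefix:
  fixes s :: "nat \<Rightarrow> monom"
  shows "\<exists>r. strict_mono r \<and> (\<forall>n. \<forall>k<L. lookup (s (r n)) k \<le> lookup (s (r (Suc n))) k)"
proof (induction L)
  case 0
  then show ?case by (intro exI[of _ id]) (auto simp: strict_mono_def)
next
  case (Suc L)
  then obtain r where r: "strict_mono r"
      "\<forall>n. \<forall>k<L. lookup (s (r n)) k \<le> lookup (s (r (Suc n))) k"
    by blast
  obtain r' where r': "strict_mono r'"
      "\<forall>n. lookup (s (r (r' n))) L \<le> lookup (s (r (r' (Suc n)))) L"
    using nat_seq_mono_subseq[of "\<lambda>n. lookup (s (r n)) L"] by blast
  have "lookup (s (r (r' n))) k \<le> lookup (s (r (r' (Suc n)))) k" if "k < Suc L" for n k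
  proof (cases "k = L")
    case True
    then show ?thesis using r'(2) by simp
  next
    case False
    then have "k < L" using that by simp
    moreover have "r' n \<le> r' (Suc n)" using r'(1) by (simp add: strict_mono_less_eq)
    ultimately show ?thesis using lift_Suc_mono_le[of "\<lambda>n. lookup (s (r n)) k"] r(2) by blast
  qed
  moreover have "strict_mono (r \<circ> r')" using r(1) r'(1) by (rule strict_mono_o)
  ultimately show ?case by (intro exI[of _ "r \<circ> r'"]) (simp add: comp_def)
qed

lemma dickson:
  fixes s :: "nat \<Rightarrow> monom"
  assumes "\<And>n. s n \<in> monoms l"
  shows "\<exists>r. strict_mono r \<and> (\<forall>n. \<exists>e. s (r (Suc n)) = e + s (r n))"
proof -
  obtain r where r: "strict_mono r"
      "\<forall>n. \<forall>k<l. lookup (s (r n)) k \<le> lookup (s (r (Suc n))) k"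
    using dickson_prefix by blast
  have "lookup (s (r n)) k \<le> lookup (s (r (Suc n))) k" for n k
    using r(2) monoms_lookup_eq_0[OF assms[of "r n"], of k] by (cases "k < l") auto
  then have "s (r (Suc n)) = (s (r (Suc n)) - s (r n)) + s (r n)" for n
    by (intro poly_mapping_eqI) (simp add: lookup_add lookup_minus)
  then show ?thesis using r(1) by blast
qed

lemma wf_term_less:
  assumes "term_order l le"
  shows "wf (term_less l le)"
  unfolding wf_iff_no_infinite_down_chain
proof
  assume "\<exists>f. \<forall>i. (f (Suc i), f i) \<in> term_less l le"
  then obtain f where f: "\<And>i. (f (Suc i), f i) \<in> term_less l le" by blast
  have desc: "(f j, f i) \<in> term_less l le" if "i < j" for i j
    using that f trans_term_less[OF assms] by (induction rule: less_Suc_induct) (auto dest: transD)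
  have fm: "f i \<in> monoms l" for i using f unfolding term_less_def by blast
  obtain r where r: "strict_mono r" "\<forall>n. \<exists>e. f (r (Suc n)) = e + f (r n)"
    using dickson[of f l, OF fm] by blast
  then obtain e where e: "f (r 1) = e + f (r 0)" by fastforce
  moreover have "e \<in> monoms l" using fm[of "r 1"] unfolding e by (rule monoms_add_left)
  ultimately have "le (f (r 0)) (f (r 1))" using term_order_le_add[OF assms fm] by simp
  moreover have "(f (r 1), f (r 0)) \<in> term_less l le" using desc r(1) by (simp add: strict_mono_def)
  ultimately show False unfolding term_less_def using term_orderD(2)[OF assms] by blast
qed

section \<open>Existence of minimal strong Groebner bases\<close>

text \<open>A pair \<open>(m, c)\<close> stands for the term \<open>c x\<^sup>m\<close>; \<open>lm_dvd\<close> is divisibility of such terms.\<close>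

definition lms :: "(monom \<Rightarrow> monom \<Rightarrow> bool) \<Rightarrow> mpoly set \<Rightarrow> (monom \<times> int) set" where
  "lms le I = {(lterm le f, lcoeff le f) | f. f \<in> I \<and> f \<noteq> 0}"

definition lm_dvd :: "monom \<times> int \<Rightarrow> monom \<times> int \<Rightarrow> bool" where
  "lm_dvd q q' \<longleftrightarrow> (\<exists>e. fst q' = e + fst q) \<and> snd q dvd snd q'"

definition minimal_lms :: "(monom \<Rightarrow> monom \<Rightarrow> bool) \<Rightarrow> mpoly set \<Rightarrow> (monom \<times> int) set" where
  "minimal_lms le I = {q \<in> lms le I. 0 < snd q \<and> (\<forall>q'\<in>lms le I. lm_dvd q' q \<longrightarrow> lm_dvd q q')}"

lemma lm_dvd_refl: "lm_dvd q q"
  unfolding lm_dvd_def by (metis add_0 dvd_refl)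

lemma lm_dvd_trans: "lm_dvd q q' \<Longrightarrow> lm_dvd q' q'' \<Longrightarrow> lm_dvd q q''"
  unfolding lm_dvd_def by (metis add.assoc dvd_trans)

lemma pdvd_single_iff:
  assumes "m' \<in> monoms l" "c' \<noteq> 0"
  shows "pdvd l (single m c) (single m' c') \<longleftrightarrow> lm_dvd (m, c) (m', c')"
proof
  assume "pdvd l (single m c) (single m' c')"
  then obtain h where h: "single m' c' = h * single m c" unfolding pdvd_def by blast
  have "\<exists>e. m' = e + m"
  proof (rule ccontr)
    assume "\<nexists>e. m' = e + m"
    then have "lookup (h * single m c) m' = 0" by (rule lookup_mult_single_not_add)
    then show False using h assms(2) by (metis lookup_single_eq)
  qed
  then obtain e where e: "m' = e + m" ..
  have "c' = lookup (h * single m c) (e + m)" using h e by (metis lookup_single_eq)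
  also have "\<dots> = lookup h e * c" by (rule lookup_mult_single_add)
  finally show "lm_dvd (m, c) (m', c')" unfolding lm_dvd_def using e by auto
next
  assume "lm_dvd (m, c) (m', c')"
  then obtain e where e: "m' = e + m" and dvd: "c dvd c'" unfolding lm_dvd_def by auto
  have "e \<in> monoms l" using assms(1) unfolding e by (rule monoms_add_left)
  moreover have "single m' c' = single e (c' div c) * single m c"
    using dvd by (simp add: mult_single e)
  ultimately show "pdvd l (single m c) (single m' c')" unfolding pdvd_def using polys_single by blast
qed

lemma lm_dvd_antisym:
  assumes "lm_dvd q q'" "lm_dvd q' q" "0 \<le> snd q" "0 \<le> snd q'"
  shows "q = q'"
proof -
  have "fst q = fst q'" using assms(1,2) monom_add_antisym unfolding lm_dvd_def by metis
  moreover have "snd q = snd q'" using assms zdvd_antisym_nonneg unfolding lm_dvd_def by blast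
  ultimately show ?thesis by (simp add: prod_eq_iff)
qed

lemma ideal_subset_by_lterms:
  assumes TO: "term_order l le" and I: "is_ideal l I" and J: "is_ideal l J"
    and lt: "\<And>f. f \<in> I \<Longrightarrow> f \<noteq> 0 \<Longrightarrow>
      \<exists>h\<in>I \<inter> J. h \<noteq> 0 \<and> lterm le h = lterm le f \<and> lcoeff le h = lcoeff le f"
  shows "I \<subseteq> J"
proof -
  have "\<forall>f. f \<in> I \<longrightarrow> f \<noteq> 0 \<longrightarrow> lterm le f = t \<longrightarrow> f \<in> J" for t
  proof (induction t rule: wf_induct[OF wf_term_less[OF TO]])
    case (1 t)
    show ?case
    proof (intro allI impI)
      fix f assume f: "f \<in> I" "f \<noteq> 0" "lterm le f = t"
      obtain h where h: "h \<in> I" "h \<in> J" "h \<noteq> 0" "lterm le h = lterm le f" "lcoeff le h = lcoeff le f"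
        using lt[OF f(1,2)] by blast
      \<comment> \<open>cancelling the leading term lowers it, so induction applies to \<open>f - h\<close>\<close>
      have "f - h \<in> J"
      proof (cases "f = h")
        case False
        have "f \<in> polys l" "h \<in> polys l" using f(1) h(1) is_idealD(1)[OF I] by auto
        then have "(lterm le (f - h), t) \<in> term_less l le"
          using lterm_diff_less[OF TO _ _ f(2) h(3) False h(4,5)] f(3) by simp
        moreover have "f - h \<in> I" using is_ideal_diff[OF I f(1) h(1)] .
        ultimately show ?thesis using 1 is_idealD(2)[OF J] by (cases "f - h = 0") auto
      qed (simp add: is_idealD(2)[OF J])
      then have "(f - h) + h \<in> J" using is_idealD(3)[OF J] h(2) by blast
      then show "f \<in> J" by simp
    qed
  qed
  then show ?thesis by (metis is_idealD(2)[OF J] subsetI)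
qed

lemma ideal_gen_eq_if_LM_dvd:
  assumes TO: "term_order l le" and ID: "is_ideal l I" and fin: "finite G" and GI: "G \<subseteq> I - {0}"
    and cover: "\<And>f. f \<in> I - {0} \<Longrightarrow> \<exists>g\<in>G. pdvd l (LM le g) (LM le f)"
  shows "ideal_gen l G = I"
proof
  show "ideal_gen l G \<subseteq> I" using ideal_gen_subset[OF ID] GI by blast
  have GP: "G \<subseteq> polys l" using GI is_idealD(1)[OF ID] by blast
  show "I \<subseteq> ideal_gen l G"
  proof (rule ideal_subset_by_lterms[OF TO ID is_ideal_ideal_gen[OF GP]])
    fix f assume f: "f \<in> I" "f \<noteq> 0"
    have fp: "f \<in> polys l" using f(1) is_idealD(1)[OF ID] by blast
    obtain g where g: "g \<in> G" "pdvd l (LM le g) (LM le f)" using cover f by blast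
    have gp: "g \<in> I" "g \<in> polys l" "g \<noteq> 0" using g(1) GI is_idealD(1)[OF ID] by auto
    have f_lm: "lterm le f \<in> monoms l" "lcoeff le f \<noteq> 0"
      using lterm_in_monoms[OF TO fp f(2)] lcoeff_nonzero[OF TO fp f(2)] .
    then obtain e d where e: "lterm le f = e + lterm le g" and d: "lcoeff le f = lcoeff le g * d"
      using g(2) pdvd_single_iff unfolding LM_def lm_dvd_def by (auto elim!: dvdE)
    have em: "e \<in> monoms l" using f_lm(1) unfolding e by (rule monoms_add_left)
    have "d \<noteq> 0" using d f_lm(2) by auto
    then have h: "g * single e d \<noteq> 0" "lterm le (g * single e d) = lterm le f"
      "lcoeff le (g * single e d) = lcoeff le f"
      using lterm_mult_single[OF TO gp(2,3) em] e d by (simp_all add: ac_simps)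
    have "g * single e d \<in> I \<inter> ideal_gen l G"
      using is_ideal_mult_single[OF ID gp(1) em]
        is_ideal_mult_single[OF is_ideal_ideal_gen[OF GP] ideal_gen_base[OF fin g(1)] em] by blast
    then show "\<exists>h\<in>I \<inter> ideal_gen l G. h \<noteq> 0 \<and> lterm le h = lterm le f \<and> lcoeff le h = lcoeff le f"
      using h by blast
  qed
qed

context
  fixes l le I
  assumes TO: "term_order l le" and ID: "is_ideal l I"
begin

lemma lmsD: "q \<in> lms le I \<Longrightarrow> fst q \<in> monoms l \<and> snd q \<noteq> 0"
  unfolding lms_def using lterm_in_monoms[OF TO] lcoeff_nonzero[OF TO] is_idealD(1)[OF ID] by auto

lemma lmsI: "f \<in> I \<Longrightarrow> f \<noteq> 0 \<Longrightarrow> (lterm le f, lcoeff le f) \<in> lms le I"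
  unfolding lms_def by blast

lemma lmsE:
  assumes "(m, c) \<in> lms le I"
  obtains f where "f \<in> I" "f \<in> polys l" "f \<noteq> 0" "lterm le f = m" "lcoeff le f = c"
  using assms is_idealD(1)[OF ID] unfolding lms_def by auto

lemma lms_mult_monom:
  assumes "(m, c) \<in> lms le I" "e \<in> monoms l"
  shows "(m + e, c) \<in> lms le I"
proof -
  obtain f where f: "f \<in> I" "f \<in> polys l" "f \<noteq> 0" "lterm le f = m" "lcoeff le f = c"
    using assms(1) by (rule lmsE)
  have "f * single e 1 \<in> I" using is_ideal_mult_single[OF ID f(1) assms(2)] .
  then show ?thesis
    using lmsI[of "f * single e 1"] lterm_mult_single[OF TO f(2,3) assms(2), of 1] f(4,5) by simp
qed

lemma lms_lincomb:
  assumes "(m, c) \<in> lms le I" "(m, c') \<in> lms le I" "c * u + c' * v \<noteq> 0"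
  shows "(m, c * u + c' * v) \<in> lms le I"
proof -
  obtain f where f: "f \<in> I" "f \<in> polys l" "f \<noteq> 0" "lterm le f = m" "lcoeff le f = c"
    using assms(1) by (rule lmsE)
  obtain f' where f': "f' \<in> I" "f' \<in> polys l" "f' \<noteq> 0" "lterm le f' = m" "lcoeff le f' = c'"
    using assms(2) by (rule lmsE)
  define h where "h = f * single 0 u + f' * single 0 v"
  have "h \<in> I" unfolding h_def using is_ideal_mult_single[OF ID] is_idealD(3)[OF ID] f(1) f'(1) by simp
  moreover have "lterm le h = m" "lcoeff le h = c * u + c' * v"
    using lterm_lincomb[OF TO f(2) f'(2) f(3) f'(3), of u v] assms(3) f f' unfolding h_def by auto
  moreover have "h \<noteq> 0" using calculation(3) assms(3) unfolding lcoeff_def by auto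
  ultimately show ?thesis using lmsI[of h] by simp
qed

lemma lms_gcd:
  assumes "(m, c) \<in> lms le I" "(m, c') \<in> lms le I"
  shows "(m, gcd c c') \<in> lms le I"
proof -
  obtain u v where uv: "u * c + v * c' = gcd c c'" using bezout_int by blast
  moreover have "gcd c c' \<noteq> 0" using lmsD[OF assms(1)] by simp
  ultimately show ?thesis using lms_lincomb[OF assms, of u v] by (simp add: mult.commute)
qed

lemma lms_abs:
  assumes "(m, c) \<in> lms le I"
  shows "(m, \<bar>c\<bar>) \<in> lms le I"
proof -
  have "c * sgn c = \<bar>c\<bar>" by (cases "0 < c") (auto simp: sgn_if)
  then show ?thesis using lms_lincomb[OF assms assms, of "sgn c" 0] lmsD[OF assms] by simp
qed

lemma minimal_lms_eq:
  assumes "q \<in> minimal_lms le I" "q' \<in> minimal_lms le I" "lm_dvd q q'"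
  shows "q = q'"
  using assms lm_dvd_antisym unfolding minimal_lms_def by auto

lemma minimal_lms_coeff_less:
  assumes q: "q \<in> minimal_lms le I" and q': "q' \<in> minimal_lms le I"
    and dvd: "fst q' = e + fst q" and "q \<noteq> q'"
  shows "snd q' < snd q"
proof -
  obtain m c m' c' where qs: "q = (m, c)" "q' = (m', c')" by fastforce
  have lms: "(m, c) \<in> lms le I" "(m', c') \<in> lms le I" "0 < c" "0 < c'"
    using q q' unfolding qs minimal_lms_def by auto
  have "e \<in> monoms l" using lmsD[OF lms(2)] dvd unfolding qs by (auto intro: monoms_add_left)
  then have "(m', c) \<in> lms le I" using lms_mult_monom[OF lms(1)] dvd unfolding qs by (simp add: add.commute)
  then have "(m', gcd c c') \<in> lms le I" using lms_gcd lms(2) by blast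
  moreover have "lm_dvd (m', gcd c c') q'" unfolding qs lm_dvd_def by (auto intro: exI[of _ 0])
  ultimately have "lm_dvd q' (m', gcd c c')" using q' unfolding minimal_lms_def by blast
  then have "c' dvd c" unfolding qs lm_dvd_def by (auto intro: dvd_trans)
  moreover have "c' \<noteq> c"
  proof
    assume "c' = c"
    then have "lm_dvd q q'" using dvd unfolding qs lm_dvd_def by auto
    then show False using minimal_lms_eq[OF q q'] \<open>q \<noteq> q'\<close> by blast
  qed
  ultimately show ?thesis using lms(3,4) zdvd_imp_le[of c' c] unfolding qs by auto
qed

lemma finite_minimal_lms: "finite (minimal_lms le I)"
proof (rule ccontr)
  assume "infinite (minimal_lms le I)"
  then obtain q :: "nat \<Rightarrow> monom \<times> int" where q: "inj q" "range q \<subseteq> minimal_lms le I"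
    using infinite_countable_subset by blast
  then have qM: "q n \<in> minimal_lms le I" for n by blast
  have "fst (q n) \<in> monoms l" for n using qM[of n] lmsD unfolding minimal_lms_def by blast
  then obtain r where r: "strict_mono r" "\<forall>n. \<exists>e. fst (q (r (Suc n))) = e + fst (q (r n))"
    using dickson[of "\<lambda>n. fst (q n)" l] by blast
  have less: "snd (q (r (Suc n))) < snd (q (r n))" for n
  proof -
    have "r n \<noteq> r (Suc n)" using strict_monoD[OF r(1), of n "Suc n"] by simp
    then have "q (r n) \<noteq> q (r (Suc n))" using q(1) by (simp add: inj_eq)
    moreover obtain e where "fst (q (r (Suc n))) = e + fst (q (r n))" using r(2) by blast
    ultimately show ?thesis using minimal_lms_coeff_less[OF qM qM] by blast
  qed
  have bound: "snd (q (r n)) + int n \<le> snd (q (r 0))" for n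
  proof (induction n)
    case (Suc n)
    then show ?case using less[of n] by simp
  qed simp
  have pos: "0 < snd (q n)" for n using qM[of n] unfolding minimal_lms_def by blast
  let ?N = "nat (snd (q (r 0)))"
  have "snd (q (r ?N)) + snd (q (r 0)) \<le> snd (q (r 0))"
    using bound[of ?N] pos[of "r 0"] by simp
  then show False using pos[of "r ?N"] by simp
qed

lemma lm_dvd_proper:
  assumes "q \<in> lms le I" "q' \<in> lms le I" "lm_dvd q' q" "\<not> lm_dvd q q'"
  shows "(q', q) \<in> term_less l le <*lex*> measure (nat \<circ> abs)"
proof -
  obtain m c m' c' where qs: "q = (m, c)" "q' = (m', c')" by fastforce
  have mc: "m \<in> monoms l" "m' \<in> monoms l" "c \<noteq> 0"
    using lmsD[OF assms(1)] lmsD[OF assms(2)] unfolding qs by auto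
  obtain e where e: "m = e + m'" and "c' dvd c" using assms(3) unfolding qs lm_dvd_def by auto
  show ?thesis
  proof (cases "m' = m")
    case True
    then have "\<not> c dvd c'" using assms(4) unfolding qs lm_dvd_def by (auto intro: exI[of _ 0])
    then have "\<bar>c'\<bar> < \<bar>c\<bar>"
      using \<open>c' dvd c\<close> mc(3) dvd_imp_le_int[of c c'] by (metis abs_dvd_iff dvd_refl order_le_less)
    then show ?thesis using True mc(3) unfolding qs by simp
  next
    case False
    have "e \<in> monoms l" using mc(1) unfolding e by (rule monoms_add_left)
    then have "le m' m" using term_order_le_add[OF TO mc(2)] e by simp
    then show ?thesis using False mc unfolding qs term_less_def by simp
  qed
qed

lemma minimal_lms_dvd:
  assumes "q \<in> lms le I"
  obtains q' where "q' \<in> minimal_lms le I" "lm_dvd q' q"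
proof -
  let ?R = "term_less l le <*lex*> measure (nat \<circ> abs)"
  let ?D = "{q'\<in>lms le I. lm_dvd q' q}"
  have "wf ?R" using wf_term_less[OF TO] by auto
  moreover have "q \<in> ?D" using assms lm_dvd_refl by blast
  ultimately obtain q0 where q0: "q0 \<in> ?D" and min: "\<And>q'. (q', q0) \<in> ?R \<Longrightarrow> q' \<notin> ?D"
    by (rule wfE_min) blast
  obtain m c where q0s: "q0 = (m, c)" by fastforce
  have abs_dvd: "lm_dvd (m, \<bar>c\<bar>) q0" "lm_dvd q0 (m, \<bar>c\<bar>)"
    unfolding q0s lm_dvd_def by (auto intro: exI[of _ 0])
  have "lm_dvd (m, \<bar>c\<bar>) q'" if q': "q' \<in> lms le I" "lm_dvd q' (m, \<bar>c\<bar>)" for q'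
  proof -
    have "lm_dvd q' q0" using q'(2) abs_dvd(1) by (rule lm_dvd_trans)
    moreover have "lm_dvd q' q" using \<open>lm_dvd q' q0\<close> q0 lm_dvd_trans by blast
    ultimately have "lm_dvd q0 q'"
      using min[of q'] lm_dvd_proper[of q0 q'] q0 q'(1) by blast
    then show ?thesis using abs_dvd(1) lm_dvd_trans by blast
  qed
  moreover have "(m, \<bar>c\<bar>) \<in> lms le I" "0 < \<bar>c\<bar>"
    using q0 lms_abs lmsD[of q0] unfolding q0s by auto
  ultimately have "(m, \<bar>c\<bar>) \<in> minimal_lms le I" unfolding minimal_lms_def by auto
  moreover have "lm_dvd (m, \<bar>c\<bar>) q" using abs_dvd(1) q0 lm_dvd_trans by blast
  ultimately show ?thesis using that by blast
qed

end

lemma min_strong_GB_exists: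
  assumes TO: "term_order l le" and ID: "is_ideal l I"
  obtains G where "min_strong_GB l le I G"
proof -
  let ?M = "minimal_lms le I"
  have "\<forall>q\<in>?M. \<exists>g. g \<in> I \<and> g \<noteq> 0 \<and> lterm le g = fst q \<and> lcoeff le g = snd q"
    unfolding minimal_lms_def lms_def by auto
  then obtain w where "\<forall>q\<in>?M. w q \<in> I \<and> w q \<noteq> 0 \<and> lterm le (w q) = fst q \<and> lcoeff le (w q) = snd q"
    by (subst (asm) bchoice_iff) blast
  then have w: "\<And>q. q \<in> ?M \<Longrightarrow>
      w q \<in> I \<and> w q \<noteq> 0 \<and> lterm le (w q) = fst q \<and> lcoeff le (w q) = snd q"
    by blast
  define G where "G = w ` ?M"
  have LM_w: "LM le (w q) = single (fst q) (snd q)" if "q \<in> ?M" for q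
    using w[OF that] unfolding LM_def by simp
  have fin: "finite G" unfolding G_def using finite_minimal_lms[OF TO ID] by simp
  have GI: "G \<subseteq> I - {0}" unfolding G_def using w by auto
  have cover: "\<exists>g\<in>G. pdvd l (LM le g) (LM le f)" if f: "f \<in> I - {0}" for f
  proof -
    have fp: "f \<in> polys l" using f is_idealD(1)[OF ID] by blast
    have "(lterm le f, lcoeff le f) \<in> lms le I" using f lmsI[OF TO ID] by blast
    then obtain q where q: "q \<in> ?M" "lm_dvd q (lterm le f, lcoeff le f)"
      using minimal_lms_dvd[OF TO ID] by blast
    have "lterm le f \<in> monoms l" "lcoeff le f \<noteq> 0"
      using f fp lterm_in_monoms[OF TO] lcoeff_nonzero[OF TO] by auto
    then have "pdvd l (single (fst q) (snd q)) (LM le f)"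
      unfolding LM_def using pdvd_single_iff q(2) by (cases q) auto
    then show ?thesis using q(1) LM_w[OF q(1)] unfolding G_def by (metis imageI)
  qed
  have antichain: "\<not> pdvd l (LM le g) (LM le g')" if g: "g \<in> G" "g' \<in> G" "g \<noteq> g'" for g g'
  proof
    assume dvd: "pdvd l (LM le g) (LM le g')"
    obtain q q' where q: "q \<in> ?M" "g = w q" and q': "q' \<in> ?M" "g' = w q'"
      using g(1,2) unfolding G_def by blast
    have "fst q' \<in> monoms l" "snd q' \<noteq> 0" using q'(1) lmsD[OF TO ID] unfolding minimal_lms_def by auto
    then have "lm_dvd q q'"
      using dvd pdvd_single_iff LM_w q q' by (cases q, cases q') auto
    then show False using minimal_lms_eq[OF TO ID q(1) q'(1)] q q' g(3) by blast
  qed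
  have "min_strong_GB l le I G"
    unfolding min_strong_GB_def using fin GI cover antichain ideal_gen_eq_if_LM_dvd[OF TO ID fin GI cover]
    by blast
  then show ?thesis by (rule that)
qed

lemma lucky_lterm_dvd:
  assumes TO: "term_order l le" and ID: "is_ideal l I" and "lucky l le p I" "f \<in> I" "f \<noteq> 0"
  obtains g where "g \<in> I" "g \<noteq> 0" "\<exists>e. lterm le f = e + lterm le g" "\<not> p dvd lcoeff le g"
proof -
  obtain G where G: "min_strong_GB l le I G" using min_strong_GB_exists[OF TO ID] .
  then obtain g where g: "g \<in> G" "pdvd l (LM le g) (LM le f)"
    using assms(4,5) unfolding min_strong_GB_def by blast
  have gI: "g \<in> I" "g \<noteq> 0" using g(1) G unfolding min_strong_GB_def by auto
  have "f \<in> polys l" using assms(4) is_idealD(1)[OF ID] by blast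
  then have "lterm le f \<in> monoms l" "lcoeff le f \<noteq> 0"
    using assms(5) lterm_in_monoms[OF TO] lcoeff_nonzero[OF TO] by auto
  then have "\<exists>e. lterm le f = e + lterm le g"
    using g(2) pdvd_single_iff unfolding LM_def lm_dvd_def by auto
  moreover have "\<not> p dvd lcoeff le g" using assms(3) G g(1) unfolding lucky_def by blast
  ultimately show ?thesis using that gI by blast
qed

section \<open>Codimension of two hyperplanes\<close>

interpretation QV: vector_space "(\<lambda>c x. (\<lambda>k. c * x k)) :: rat \<Rightarrow> (nat \<Rightarrow> rat) \<Rightarrow> (nat \<Rightarrow> rat)"
  by unfold_locales (auto simp: fun_eq_iff algebra_simps)

definition eval_form :: "nat \<Rightarrow> (nat \<Rightarrow> int) \<Rightarrow> (nat \<Rightarrow> rat) \<Rightarrow> rat" where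
  "eval_form l a x = (\<Sum>k<l. of_int (a k) * x k)"

definition unit_vec :: "nat \<Rightarrow> nat \<Rightarrow> rat" where
  "unit_vec j = (\<lambda>k. if k = j then 1 else 0)"

lemma hyperplane_iff: "x \<in> hyperplane l a \<longleftrightarrow> x \<in> qvecs l \<and> eval_form l a x = 0"
  unfolding hyperplane_def eval_form_def by simp

lemma eval_form_unit_vec: "j < l \<Longrightarrow> eval_form l a (unit_vec j) = of_int (a j)"
  unfolding eval_form_def unit_vec_def by (simp add: if_distrib[of "\<lambda>x. _ * x"] cong: if_cong)

lemma unit_vec_inject: "unit_vec i = unit_vec j \<Longrightarrow> i = j"
  unfolding unit_vec_def by (metis one_neq_zero)

lemma sum_fun_apply: "(\<Sum>v\<in>A. (f v :: nat \<Rightarrow> rat)) k = (\<Sum>v\<in>A. f v k)"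
  by (induction A rule: infinite_finite_induct) auto

lemma lin_indep_list_distinct:
  assumes "lin_indep_list vs"
  shows "distinct vs"
proof (rule ccontr)
  assume "\<not> distinct vs"
  then obtain i j where ij: "i < length vs" "j < length vs" "i \<noteq> j" "vs ! i = vs ! j"
    by (auto simp: distinct_conv_nth)
  define c where "c t = (if t = i then 1 else 0) - (if t = j then 1 else (0::rat))" for t
  have "(\<Sum>t<length vs. c t * (vs ! t) k) = 0" for k
  proof -
    have "(\<Sum>t<length vs. c t * (vs ! t) k)
        = (\<Sum>t<length vs. if t = i then (vs ! t) k else 0) - (\<Sum>t<length vs. if t = j then (vs ! t) k else 0)"
      unfolding c_def
      by (simp add: left_diff_distrib sum_subtractf if_distrib[of "\<lambda>x. x * _"] cong: if_cong)
    also have "\<dots> = 0" using ij by simp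
    finally show ?thesis .
  qed
  then have "c i = 0" using assms ij(1) unfolding lin_indep_list_def by blast
  then show False using ij(3) unfolding c_def by simp
qed

lemma lin_indep_list_set_coeffs:
  assumes indep: "lin_indep_list vs" and comb: "\<And>k. (\<Sum>v\<in>set vs. w v * v k) = 0"
  shows "\<forall>v\<in>set vs. w v = 0"
proof -
  have dist: "distinct vs" using indep by (rule lin_indep_list_distinct)
  have "(\<Sum>i<length vs. w (vs ! i) * (vs ! i) k) = (\<Sum>v\<in>set vs. w v * v k)" for k
  proof -
    have "inj_on (nth vs) {..<length vs}" using inj_on_nth[OF dist] by simp
    moreover have "nth vs ` {..<length vs} = set vs" by (auto simp: set_conv_nth)
    ultimately show ?thesis using sum.reindex[of "nth vs" "{..<length vs}" "\<lambda>v. w v * v k"] by simp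
  qed
  then have "(\<lambda>k. \<Sum>i<length vs. w (vs ! i) * (vs ! i) k) = (\<lambda>k. 0)" using comb by simp
  then have "\<forall>i<length vs. w (vs ! i) = 0"
    using indep[unfolded lin_indep_list_def, rule_format, of "\<lambda>i. w (vs ! i)"] by simp
  then show ?thesis by (auto simp: set_conv_nth)
qed

lemma lin_indep_list_map_unit_coords:
  assumes dks: "distinct ks"
    and z: "\<And>k j. k \<in> set ks \<Longrightarrow> j \<in> set ks \<Longrightarrow> z k j = (if j = k then 1 else 0)"
  shows "lin_indep_list (map z ks)"
  unfolding lin_indep_list_def
proof (intro allI impI)
  fix c :: "nat \<Rightarrow> rat" and i0
  assume eq: "(\<lambda>k. \<Sum>i<length (map z ks). c i * (map z ks ! i) k) = (\<lambda>k. 0)"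
    and "i0 < length (map z ks)"
  then have i0: "i0 < length ks" by simp
  have "(map z ks ! i) (ks ! i0) = (if i = i0 then 1 else 0)" if "i < length ks" for i
    using z[of "ks ! i" "ks ! i0"] that i0 nth_eq_iff_index_eq[OF dks i0 that] by auto
  then have "(\<Sum>i<length (map z ks). c i * (map z ks ! i) (ks ! i0)) = c i0"
    using i0 by (simp add: if_distrib[of "\<lambda>x. _ * x"] cong: if_cong)
  then show "c i0 = 0" using fun_cong[OF eq, of "ks ! i0"] by simp
qed

lemma qvecs_in_span_unit_vecs:
  assumes "x \<in> qvecs l"
  shows "x \<in> QV.span (unit_vec ` {..<l})"
proof -
  have "x = (\<Sum>j<l. (\<lambda>k. x j * unit_vec j k))"
  proof
    fix k
    show "x k = (\<Sum>j<l. (\<lambda>k. x j * unit_vec j k)) k"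
      using assms unfolding sum_fun_apply unit_vec_def qvecs_def
      by (cases "k < l") (simp_all add: if_distrib[of "\<lambda>y. _ * y"] cong: if_cong)
  qed
  also have "\<dots> \<in> QV.span (unit_vec ` {..<l})"
    by (intro QV.span_sum QV.span_scale QV.span_base) auto
  finally show ?thesis .
qed

context
  fixes l :: nat and a b :: "nat \<Rightarrow> int" and u s :: nat
  assumes us: "u < l" "s < l" "u \<noteq> s" and minor: "a u * b s - a s * b u \<noteq> 0"
begin

lemma minor_system_trivial:
  fixes x y :: rat
  assumes "x * of_int (a u) + y * of_int (a s) = 0" "x * of_int (b u) + y * of_int (b s) = 0"
  shows "x = 0" "y = 0"
proof -
  let ?D = "of_int (a u) * of_int (b s) - of_int (a s) * of_int (b u) :: rat"
  have D: "?D \<noteq> 0" using minor by (metis of_int_0_eq_iff of_int_diff of_int_mult)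
  have "x * ?D = (x * of_int (a u) + y * of_int (a s)) * of_int (b s)
      - (x * of_int (b u) + y * of_int (b s)) * of_int (a s)"
    "y * ?D = (x * of_int (b u) + y * of_int (b s)) * of_int (a u)
      - (x * of_int (a u) + y * of_int (a s)) * of_int (b u)"
    by (simp_all add: algebra_simps)
  then have "x * ?D = 0" "y * ?D = 0" unfolding assms by simp_all
  then show "x = 0" "y = 0" using D by simp_all
qed

abbreviation "hyperplane_pair \<equiv> hyperplane l a \<inter> hyperplane l b"

lemma unit_vec_notin_hyperplane_pair: "j = u \<or> j = s \<Longrightarrow> unit_vec j \<notin> hyperplane_pair"
proof
  assume j: "j = u \<or> j = s" and "unit_vec j \<in> hyperplane_pair"
  then have "of_int (a j) = (0::rat)" "of_int (b j) = (0::rat)"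
    using hyperplane_iff eval_form_unit_vec[of j l] us(1,2) by auto
  then show False using minor j by auto
qed

lemma length_lin_indep_in_hyperplane_pair:
  assumes indep: "lin_indep_list vs" and W: "set vs \<subseteq> hyperplane_pair"
  shows "length vs + 2 \<le> l"
proof -
  have dist: "distinct vs" using indep by (rule lin_indep_list_distinct)
  have notin: "unit_vec u \<notin> set vs" "unit_vec s \<notin> set vs"
    using unit_vec_notin_hyperplane_pair W by blast+
  have neq: "unit_vec u \<noteq> unit_vec s" using unit_vec_inject us(3) by metis
  define S where "S = insert (unit_vec u) (insert (unit_vec s) (set vs))"
  have finS: "finite S" unfolding S_def by simp
  have "QV.independent S"
  proof
    assume "QV.dependent S"
    then obtain w where w: "\<exists>v\<in>S. w v \<noteq> 0" "(\<Sum>v\<in>S. (\<lambda>k. w v * v k)) = 0"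
      using QV.dependent_finite[OF finS] by blast
    have comb: "(\<Sum>v\<in>S. w v * v k) = 0" for k
      using fun_cong[OF w(2), of k] unfolding sum_fun_apply by simp
    \<comment> \<open>evaluating both forms on the relation kills the coefficients of the unit vectors\<close>
    have "(\<Sum>v\<in>S. w v * eval_form l c v) = (\<Sum>k<l. of_int (c k) * (\<Sum>v\<in>S. w v * v k))" for c
      unfolding eval_form_def
      by (simp add: sum_distrib_left sum_distrib_right algebra_simps sum.swap[of _ S])
    then have "(\<Sum>v\<in>S. w v * eval_form l c v) = 0" for c using comb by simp
    then have relation: "w (unit_vec u) * eval_form l c (unit_vec u)
        + w (unit_vec s) * eval_form l c (unit_vec s) + (\<Sum>v\<in>set vs. w v * eval_form l c v) = 0" for c
      unfolding S_def using notin neq by (simp add: sum.insert_if add.assoc)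
    have vs_zero: "(\<Sum>v\<in>set vs. w v * eval_form l c v) = 0" if "c = a \<or> c = b" for c
      using that W hyperplane_iff by (auto intro!: sum.neutral)
    have "w (unit_vec u) * of_int (c u) + w (unit_vec s) * of_int (c s) = 0" if "c = a \<or> c = b" for c
      using relation[of c] vs_zero[OF that] eval_form_unit_vec[OF us(1), of c]
        eval_form_unit_vec[OF us(2), of c] by simp
    then have wz: "w (unit_vec u) = 0" "w (unit_vec s) = 0"
      using minor_system_trivial by blast+
    have "(\<Sum>v\<in>set vs. w v * v k) = 0" for k
      using comb[of k] wz notin neq unfolding S_def by (simp add: sum.insert_if)
    then have "\<forall>v\<in>set vs. w v = 0" by (rule lin_indep_list_set_coeffs[OF indep])
    then show False using w(1) wz unfolding S_def by auto
  qed
  moreover have "S \<subseteq> QV.span (unit_vec ` {..<l})"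
  proof -
    have "set vs \<subseteq> qvecs l" using W unfolding hyperplane_def by auto
    then show ?thesis
      using us qvecs_in_span_unit_vecs unfolding S_def by (auto intro: QV.span_base)
  qed
  ultimately have "card S \<le> card (unit_vec ` {..<l})"
    using QV.independent_span_bound by simp
  also have "\<dots> \<le> l" using card_image_le[of "{..<l}" unit_vec] by simp
  finally show ?thesis
    using notin neq distinct_card[OF dist] unfolding S_def by simp
qed

lemma lin_indep_in_hyperplane_pair_exists:
  "\<exists>vs. length vs = l - 2 \<and> set vs \<subseteq> hyperplane_pair \<and> lin_indep_list vs"
proof -
  define D :: rat where "D = of_int (a u) * of_int (b s) - of_int (a s) * of_int (b u)"
  have D0: "D \<noteq> 0" using minor unfolding D_def by (metis of_int_0_eq_iff of_int_diff of_int_mult)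
  \<comment> \<open>Cramer's rule: \<open>z k\<close> is the solution with \<open>k\<close>-th coordinate 1 and support \<open>{k, u, s}\<close>\<close>
  define x where "x k = (of_int (a s) * of_int (b k) - of_int (a k) * of_int (b s)) / D" for k
  define y where "y k = (of_int (a k) * of_int (b u) - of_int (a u) * of_int (b k)) / D" for k
  define z where "z k = (\<lambda>j. unit_vec k j + x k * unit_vec u j + y k * unit_vec s j)" for k
  define ks where "ks = filter (\<lambda>k. k \<noteq> u \<and> k \<noteq> s) [0..<l]"
  have dks: "distinct ks" and sks: "set ks = {..<l} - {u, s}" unfolding ks_def by auto
  have "length ks = card ({..<l} - {u, s})" using distinct_card[OF dks] sks by simp
  also have "\<dots> = l - 2" using us by (subst card_Diff_subset) auto
  finally have lks: "length ks = l - 2" .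
  have "z k \<in> hyperplane_pair" if "k < l" for k
  proof -
    have "eval_form l c (z k) = eval_form l c (unit_vec k)
        + x k * eval_form l c (unit_vec u) + y k * eval_form l c (unit_vec s)" for c
      unfolding z_def eval_form_def by (simp add: algebra_simps sum.distrib sum_distrib_left)
    then have "eval_form l c (z k) = of_int (c k) + x k * of_int (c u) + y k * of_int (c s)" for c
      using eval_form_unit_vec that us by simp
    then have "eval_form l a (z k) = 0" "eval_form l b (z k) = 0"
      using D0 unfolding x_def y_def D_def by (simp_all add: field_simps)
    moreover have "z k \<in> qvecs l" unfolding qvecs_def z_def unit_vec_def using that us by auto
    ultimately show ?thesis using hyperplane_iff by auto
  qed
  then have "set (map z ks) \<subseteq> hyperplane_pair" using sks by auto
  moreover have "lin_indep_list (map z ks)"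
  proof (rule lin_indep_list_map_unit_coords[OF dks])
    fix k j assume "k \<in> set ks" "j \<in> set ks"
    then show "z k j = (if j = k then 1 else 0)" using sks unfolding z_def unit_vec_def by auto
  qed
  ultimately show ?thesis using lks by (intro exI[of _ "map z ks"]) simp
qed

lemma codim_hyperplane_pair: "codim l hyperplane_pair = 2"
proof -
  have "qdim hyperplane_pair = l - 2"
    unfolding qdim_def
  proof (rule Greatest_equality)
    fix d assume "\<exists>vs. length vs = d \<and> set vs \<subseteq> hyperplane_pair \<and> lin_indep_list vs"
    then show "d \<le> l - 2" using length_lin_indep_in_hyperplane_pair by fastforce
  qed (rule lin_indep_in_hyperplane_pair_exists)
  then show ?thesis unfolding codim_def using us by simp
qed

end

section \<open>Ideals generated by two linear forms\<close>

lemma single_var_eq_iff: "(single j 1 :: monom) = single k 1 \<longleftrightarrow> j = k"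
  by (metis lookup_single_eq lookup_single_not_eq one_neq_zero)

lemma lookup_linform: "lookup (linform l a) m = (\<Sum>j<l. if single j 1 = m then a j else 0)"
  unfolding linform_def lookup_sum lookup_single when_def by simp

lemma lookup_linform_var: "k < l \<Longrightarrow> lookup (linform l a) (single k 1) = a k"
  unfolding lookup_linform using single_var_eq_iff by (simp cong: if_cong)

lemma keys_linform:
  assumes "m \<in> keys (linform l a)"
  shows "\<exists>k<l. m = single k 1"
proof (rule ccontr)
  assume "\<not> (\<exists>k<l. m = single k 1)"
  then have "lookup (linform l a) m = 0" unfolding lookup_linform by (auto intro!: sum.neutral)
  with assms show False by (simp add: in_keys_iff)
qed

lemma linform_in_polys: "linform l a \<in> polys l"
  unfolding polys_def using keys_linform single_var_in_monoms by blast

lemma linform_lincomb: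
  "linform l (\<lambda>k. a k * x + b k * y) = linform l a * single 0 x + linform l b * single 0 y"
  unfolding linform_def by (simp add: sum_distrib_right sum.distrib mult_single single_add)

lemma lookup_mult_linform:
  "k < l \<Longrightarrow> lookup (f * linform l a) (single k 1) = lookup f 0 * a k"
  "lookup (f * linform l a) 0 = 0"
proof -
  have lookup_var:
    "lookup (f * single (single j 1) c) (single k 1) = (if j = k then lookup f 0 * c else 0)" for j k c
  proof (cases "j = k")
    case True
    then show ?thesis using lookup_mult_single_add[of f "single j 1" c 0] by simp
  next
    case False
    have "\<not> (\<exists>e. (single k 1 :: monom) = e + single j 1)"
    proof
      assume "\<exists>e. (single k 1 :: monom) = e + single j 1"
      then obtain e where "(single k 1 :: monom) = e + single j 1" ..
      then have "(single j 1 :: monom) = 0 \<or> (single j 1 :: monom) = single k 1"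
        by (rule monom_dvd_single_var)
      moreover have "(single j 1 :: monom) \<noteq> 0" by (metis lookup_single_eq lookup_zero one_neq_zero)
      ultimately show False using False single_var_eq_iff by blast
    qed
    then show ?thesis using False by (simp add: lookup_mult_single_not_add)
  qed
  have lookup_0: "lookup (f * single (single j 1) c) 0 = 0" for j c
  proof (rule lookup_mult_single_not_add, rule notI)
    assume "\<exists>e. (0::monom) = e + single j 1"
    then obtain e where "(0::monom) = e + single j 1" ..
    then have "lookup (0::monom) j = lookup (e + single j 1) j" by (rule arg_cong)
    then show False by (simp add: lookup_add)
  qed
  show "k < l \<Longrightarrow> lookup (f * linform l a) (single k 1) = lookup f 0 * a k"
    unfolding linform_def sum_distrib_left lookup_sum lookup_var by simp
  show "lookup (f * linform l a) 0 = 0"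
    unfolding linform_def sum_distrib_left lookup_sum lookup_0 by simp
qed

lemma lterm_linform:
  assumes TO: "term_order l le" and "\<exists>k<l. a k \<noteq> 0"
  obtains u where "u < l" "linform l a \<noteq> 0" "lterm le (linform l a) = single u 1" "a u \<noteq> 0"
proof -
  obtain k where "k < l" "a k \<noteq> 0" using assms(2) by blast
  then have "lookup (linform l a) (single k 1) \<noteq> 0" using lookup_linform_var[of k l a] by simp
  then have "linform l a \<noteq> 0" by auto
  moreover obtain u where u: "u < l" "lterm le (linform l a) = single u 1"
    using lterm_in_keys[OF TO linform_in_polys calculation] keys_linform by blast
  moreover have "a u \<noteq> 0"
    using lterm_in_keys[OF TO linform_in_polys calculation(1)] u lookup_linform_var[OF u(1)]
    by (simp add: in_keys_iff)
  ultimately show ?thesis using that by blast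
qed

context
  fixes l le and p c :: int and a b :: "nat \<Rightarrow> int"
  assumes TO: "term_order l le" and p: "prime p"
    and cong: "\<forall>k<l. [a k = c * b k] (mod p)"
    and lucky: "lucky l le p (ideal_gen l {linform l a, linform l b})"
begin

abbreviation "pair_ideal \<equiv> ideal_gen l {linform l a, linform l b}"

lemma is_ideal_pair_ideal: "is_ideal l pair_ideal"
  using is_ideal_ideal_gen linform_in_polys by simp

lemma linform_lincomb_in_pair_ideal: "linform l (\<lambda>k. a k * x + b k * y) \<in> pair_ideal"
proof -
  have "linform l a \<in> pair_ideal" "linform l b \<in> pair_ideal" using ideal_gen_base by auto
  then show ?thesis unfolding linform_lincomb
    using is_idealD(3)[OF is_ideal_pair_ideal] is_ideal_mult_single[OF is_ideal_pair_ideal] by simp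
qed

lemma pair_ideal_lookup_0: "f \<in> pair_ideal \<Longrightarrow> lookup f 0 = 0"
  by (elim ideal_gen_pair_elem) (simp add: lookup_add lookup_mult_linform(2) mult.commute)

lemma pair_ideal_coeff_cong:
  assumes "f \<in> pair_ideal"
  obtains t where "\<And>k. k < l \<Longrightarrow> [lookup f (single k 1) = t * b k] (mod p)"
proof -
  obtain d e where f: "f = d * linform l a + e * linform l b"
    using assms by (elim ideal_gen_pair_elem) (simp add: mult.commute)
  have "[lookup f (single k 1) = (lookup d 0 * c + lookup e 0) * b k] (mod p)" if "k < l" for k
  proof -
    have "lookup f (single k 1) = lookup d 0 * a k + lookup e 0 * b k"
      unfolding f lookup_add lookup_mult_linform(1)[OF that] ..
    also have "[\<dots> = lookup d 0 * (c * b k) + lookup e 0 * b k] (mod p)"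
      using cong that by (intro cong_add cong_mult) auto
    finally show ?thesis by (simp add: algebra_simps)
  qed
  then show ?thesis using that by blast
qed

lemma pair_ideal_lterm_var:
  assumes f: "f \<in> pair_ideal" "f \<noteq> 0" "lterm le f = single w 1" and w: "w < l"
  shows "\<not> p dvd b w" "\<And>k. k < l \<Longrightarrow> k \<noteq> w \<Longrightarrow> le (single w 1) (single k 1) \<Longrightarrow> p dvd b k"
proof -
  obtain g where g: "g \<in> pair_ideal" "g \<noteq> 0" and e: "\<exists>e. single w 1 = e + lterm le g"
    and lc: "\<not> p dvd lcoeff le g"
    using lucky_lterm_dvd[OF TO is_ideal_pair_ideal lucky f(1,2)] f(3) by metis
  have gp: "g \<in> polys l" using g(1) is_idealD(1)[OF is_ideal_pair_ideal] by blast
  have "lterm le g \<noteq> 0"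
    using lterm_in_keys[OF TO gp g(2)] pair_ideal_lookup_0[OF g(1)] by (auto simp: in_keys_iff)
  then have lt: "lterm le g = single w 1" using e monom_dvd_single_var by blast
  obtain t where t: "\<And>k. k < l \<Longrightarrow> [lookup g (single k 1) = t * b k] (mod p)"
    using pair_ideal_coeff_cong[OF g(1)] by blast
  have "\<not> p dvd t * b w"
    using lc t[OF w] cong_dvd_iff unfolding lcoeff_def lt by blast
  then have t_coprime: "\<not> p dvd t" by auto
  show "\<not> p dvd b w" using \<open>\<not> p dvd t * b w\<close> by auto
  fix k assume k: "k < l" "k \<noteq> w" "le (single w 1) (single k 1)"
  moreover have "(single k 1 :: monom) \<noteq> single w 1" using k(2) single_var_eq_iff by blast
  ultimately have "lookup g (single k 1) = 0"
    using lookup_above_lterm[OF TO gp single_var_in_monoms[OF k(1)]] lt by simp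
  then have "p dvd t * b k" using t[OF k(1)] cong_dvd_iff by fastforce
  then show "p dvd b k" using t_coprime p prime_dvd_mult_iff by blast
qed

lemma lucky_congruent_forms_proportional:
  assumes "\<exists>k<l. a k \<noteq> 0"
  shows "\<exists>u<l. a u \<noteq> 0 \<and> (\<forall>s<l. a u * b s = a s * b u)"
proof -
  obtain u where u: "u < l" "linform l a \<noteq> 0" "lterm le (linform l a) = single u 1" "a u \<noteq> 0"
    using lterm_linform[OF TO assms] .
  have "a u * b s = a s * b u" if s: "s < l" for s
  proof (rule ccontr)
    assume "a u * b s \<noteq> a s * b u"
    \<comment> \<open>eliminating \<open>x\<^sub>u\<close> from the two forms leaves a form with a different leading variable\<close>
    define m where "m k = a k * (- b u) + b k * a u" for k
    have "m s \<noteq> 0" using \<open>a u * b s \<noteq> a s * b u\<close> unfolding m_def by (simp add: algebra_simps)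
    then obtain v where v: "v < l" "linform l m \<noteq> 0" "lterm le (linform l m) = single v 1" "m v \<noteq> 0"
      using lterm_linform[OF TO] s by blast
    have "v \<noteq> u" using v(4) unfolding m_def by (auto simp: algebra_simps)
    have "linform l m \<in> pair_ideal" unfolding m_def by (rule linform_lincomb_in_pair_ideal)
    have "linform l a \<in> pair_ideal" by (simp add: ideal_gen_base)
    note A = pair_ideal_lterm_var[OF this u(2,3,1)]
      and M = pair_ideal_lterm_var[OF \<open>linform l m \<in> pair_ideal\<close> v(2,3,1)]
    have "le (single u 1) (single v 1) \<or> le (single v 1) (single u 1)"
      using term_orderD(4)[OF TO single_var_in_monoms[OF u(1)] single_var_in_monoms[OF v(1)]] .
    then show False using A M \<open>v \<noteq> u\<close> u(1) v(1) by blast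
  qed
  then show ?thesis using u by blast
qed

end

lemma hyperplane_eq_if_minors_vanish:
  assumes u: "u < l" "a u \<noteq> 0" and b: "\<exists>k<l. b k \<noteq> 0"
    and minors: "\<forall>s<l. a u * b s = a s * b u"
  shows "hyperplane l a = hyperplane l b"
proof -
  have "b u \<noteq> 0"
  proof
    assume "b u = 0"
    then have "b k = 0" if "k < l" for k using minors u(2) that by simp
    then show False using b by blast
  qed
  have key: "of_int (a u) * eval_form l b x = of_int (b u) * eval_form l a x" for x
    unfolding eval_form_def sum_distrib_left
  proof (rule sum.cong)
    fix k assume "k \<in> {..<l}"
    then have "of_int (a u) * of_int (b k) = (of_int (a k) * of_int (b u) :: rat)"
      using minors by (metis lessThan_iff of_int_mult)
    then show "of_int (a u) * (of_int (b k) * x k) = of_int (b u) * (of_int (a k) * x k)"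
      by (simp add: algebra_simps)
  qed simp
  show ?thesis
    unfolding set_eq_iff hyperplane_iff
  proof
    fix x
    show "(x \<in> qvecs l \<and> eval_form l a x = 0) = (x \<in> qvecs l \<and> eval_form l b x = 0)"
      using key[of x] \<open>b u \<noteq> 0\<close> u(2) by auto
  qed
qed

lemma arrangement_forms_not_congruent:
  assumes arr: "arrangement l n alpha" and TO: "term_order l le" and p: "prime p"
    and lucky: "lucky_k l n alpha le 2 p" and ij: "i < n" "j < n" "i \<noteq> j"
  shows "\<not> (\<exists>c. \<forall>k<l. [alpha i k = c * alpha j k] (mod p))"
proof
  assume "\<exists>c. \<forall>k<l. [alpha i k = c * alpha j k] (mod p)"
  then obtain c where cong: "\<forall>k<l. [alpha i k = c * alpha j k] (mod p)" ..
  have nonzero: "\<exists>k<l. alpha i k \<noteq> 0" "\<exists>k<l. alpha j k \<noteq> 0"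
    and distinct: "hyperplane l (alpha i) \<noteq> hyperplane l (alpha j)"
    using arr ij unfolding arrangement_def by auto
  obtain u where u: "u < l" "alpha i u \<noteq> 0" using nonzero(1) by blast
  have "\<not> (\<forall>s<l. alpha i u * alpha j s = alpha i s * alpha j u)"
    using hyperplane_eq_if_minors_vanish[of u l "alpha i" "alpha j", OF u nonzero(2)] distinct
    by blast
  then obtain s where s: "s < l" "alpha i u * alpha j s - alpha i s * alpha j u \<noteq> 0" by auto
  then have "u \<noteq> s" by auto
  then have "codim l (\<Inter>k\<in>{i, j}. hyperplane l (alpha k)) = 2"
    using codim_hyperplane_pair[OF u(1) s(1) _ s(2)] by simp
  moreover have "{i, j} \<subseteq> {..<n}" "card {i, j} = 2" using ij by auto
  ultimately have "lucky l le p (ideal_gen l ((\<lambda>k. linform l (alpha k)) ` {i, j}))"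
    using lucky unfolding lucky_k_def by blast
  then have "lucky l le p (ideal_gen l {linform l (alpha i), linform l (alpha j)})" by simp
  then obtain u' where u': "u' < l" "alpha i u' \<noteq> 0"
      "\<forall>s<l. alpha i u' * alpha j s = alpha i s * alpha j u'"
    using lucky_congruent_forms_proportional[OF TO p cong] nonzero(1) by blast
  then have "hyperplane l (alpha i) = hyperplane l (alpha j)"
    by (intro hyperplane_eq_if_minors_vanish[of u' l "alpha i" "alpha j", OF _ _ nonzero(2)])
  then show False using distinct by blast
qed

theorem theorem6p3:
  fixes l n :: nat and alpha :: "nat \<Rightarrow> nat \<Rightarrow> int"
    and le :: "monom \<Rightarrow> monom \<Rightarrow> bool" and p :: int
  assumes "arrangement l n alpha"
    and "term_order l le"
    and "prime p"
    and "lucky_k l n alpha le 2 p"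
  shows "good_prime l n alpha p"
  unfolding good_prime_def
proof (intro allI impI conjI)
  fix i j assume "i < j \<and> j < n"
  then have "i < n" "j < n" "i \<noteq> j" by auto
  then show "\<not> (\<exists>c. \<forall>k<l. [alpha i k = c * alpha j k] (mod p))"
    and "\<not> (\<exists>c. \<forall>k<l. [alpha j k = c * alpha i k] (mod p))"
    using arrangement_forms_not_congruent[OF assms] by blast+
qed

end
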